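(* For $\beta\in(0,\tfrac14)$ and $\tau>0$, write $S=\sinh(2\tau)$, $C=\cosh(2\tau)$ and define $$\lambda_1^-(\beta,\tau)=\frac1\beta\Big[\frac{6S(1+C)}{(C-1)^2}-6\sqrt{\frac{S^2(1+C)^2}{(C-1)^4}-2\beta\frac{\cosh(4\tau)-C}{(C-1)^2}}\Big],\qquad \lambda_0^+(\beta,\tau)=\frac4\beta\,\frac{S}{1-C+\tau S}.$$ Then for every $\beta\in(0,\tfrac14)$ there are values $\tau^-,\tau^*,\tau^+>0$ such that $\lambda_0^+>\lambda_1^-$ at $\tau=\tau^-$, $\lambda_1^->\lambda_0^+$ at $\tau=\tau^+$, and $\lambda_1^-=\lambda_0^+$ at $\tau=\tau^*$.
   Context: These are, with $\beta=\alpha(1-\alpha)$, the smaller root of the $\ell=1$ eigenvalue equation and the positive $\ell=0$ eigenvalue for the fourth-order Steklov-type problem ($P_gu=0$, $B^1_gu=0$, $B^3_gu=\lambda u$) on the annulus $[0,\tau]\times\mathbb S^3$ with a radial conformally flat metric normalized so that $e^{3f(0)}=\alpha$, $e^{3f(\tau)}=1-\alpha$. *)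

theory Defs
  imports Complex_Main
begin

definition lambda1_minus :: "real \<Rightarrow> real \<Rightarrow> real" where
  "lambda1_minus \<beta> \<tau> =
     (let S = sinh (2*\<tau>); C = cosh (2*\<tau>) in
      (1/\<beta>) * (6*S*(1+C)/(C-1)^2
        - 6 * sqrt (S^2*(1+C)^2/(C-1)^4 - 2*\<beta>*(cosh (4*\<tau>) - C)/(C-1)^2)))"

definition lambda0_plus :: "real \<Rightarrow> real \<Rightarrow> real" where
  "lambda0_plus \<beta> \<tau> =
     (let S = sinh (2*\<tau>); C = cosh (2*\<tau>) in
      (4/\<beta>) * (S / (1 - C + \<tau>*S)))"

end

theory Submission imports Defs begin

text \<open>With \<open>s = sinh \<tau>\<close> and \<open>c = cosh \<tau>\<close> one has \<open>\<lambda>\<^sub>0\<^sup>+ = 4c / (\<beta> (\<tau>c - s))\<close>, and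
\<open>0 < \<tau>c - s\<close> gives \<open>4/(\<beta>\<tau>) < \<lambda>\<^sub>0\<^sup>+\<close>, while \<open>s < c\<close> gives \<open>\<lambda>\<^sub>0\<^sup>+ < 4/(\<beta>(\<tau> - 1))\<close> for \<open>\<tau> > 1\<close>.
Also \<open>\<lambda>\<^sub>1\<^sup>- = (6/\<beta>)(a - sqrt (a\<^sup>2 - K))\<close> with \<open>a = (c/s)\<^sup>3\<close> and \<open>K = \<beta>(3 + 4s\<^sup>2)/s\<^sup>2\<close>,
and \<open>K/(2a) \<le> a - sqrt (a\<^sup>2 - K) \<le> K/a\<close> traps \<open>\<lambda>\<^sub>1\<^sup>-\<close> between \<open>3q\<close> and \<open>6q\<close>, where
\<open>q = (3 + 4s\<^sup>2) s / c\<^sup>3\<close> is always below \<open>4\<close> and at least \<open>1\<close> once \<open>s \<ge> 1/2\<close>.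
So \<open>\<lambda>\<^sub>1\<^sup>- < 24 < \<lambda>\<^sub>0\<^sup>+\<close> for small \<open>\<tau>\<close>, \<open>\<lambda>\<^sub>0\<^sup>+ < 3 \<le> \<lambda>\<^sub>1\<^sup>-\<close> for large \<open>\<tau>\<close>, and the
intermediate value theorem gives a crossing in between.\<close>

lemma sinh_lt_mult_cosh:
  fixes t :: real
  assumes "0 < t"
  shows "sinh t < t * cosh t"
proof -
  have "(\<lambda>x. x * cosh x - sinh x) 0 < (\<lambda>x. x * cosh x - sinh x) t"
  proof (rule DERIV_pos_imp_increasing_open[OF assms])
    fix x :: real assume "0 < x" "x < t"
    show "\<exists>y. DERIV (\<lambda>x. x * cosh x - sinh x) x :> y \<and> y > 0"
      by (rule exI[of _ "x * sinh x"]) (auto intro!: derivative_eq_intros simp: \<open>0 < x\<close>)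
  qed (intro continuous_intros)
  then show ?thesis by simp
qed

lemma le_sinh_real:
  fixes x :: real
  assumes "0 \<le> x"
  shows "x \<le> sinh x"
  using real_le_x_sinh[OF assms] by (simp add: sinh_field_def exp_minus)

lemma one_minus_cosh_double_plus_mult_sinh_double:
  fixes t :: real
  shows "1 - cosh (2*t) + t * sinh (2*t) = 2 * sinh t * (t * cosh t - sinh t)"
  using cosh_square_eq[of t]
  unfolding sinh_double cosh_double by (simp add: algebra_simps power2_eq_square)

lemma lambda0_plus_eq:
  fixes t :: real
  assumes "0 < t"
  shows "lambda0_plus b t = (4/b) * (cosh t / (t * cosh t - sinh t))"
  using sinh_lt_mult_cosh[OF assms] assms
  unfolding lambda0_plus_def Let_def one_minus_cosh_double_plus_mult_sinh_double by (simp add: sinh_double)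

lemma lambda0_plus_gt:
  fixes t b :: real
  assumes "0 < t" "0 < b"
  shows "4 / (b * t) < lambda0_plus b t"
proof -
  have "1 / t < cosh t / (t * cosh t - sinh t)"
    using sinh_lt_mult_cosh[OF assms(1)] assms(1) by (simp add: field_simps)
  then have "(4/b) * (1/t) < (4/b) * (cosh t / (t * cosh t - sinh t))"
    using assms(2) by (intro mult_strict_left_mono) auto
  then show ?thesis
    unfolding lambda0_plus_eq[OF assms(1)] by simp
qed

lemma lambda0_plus_lt:
  fixes t b :: real
  assumes "1 < t" "0 < b"
  shows "lambda0_plus b t < 4 / (b * (t - 1))"
proof -
  have less: "(t - 1) * cosh t < t * cosh t - sinh t"
    using sinh_less_cosh_real[of t] by (simp add: left_diff_distrib)
  have "0 < (t - 1) * cosh t"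
    using assms(1) by simp
  then have "cosh t / (t * cosh t - sinh t) < cosh t / ((t - 1) * cosh t)"
    using less by (intro divide_strict_left_mono) auto
  then have "cosh t / (t * cosh t - sinh t) < 1 / (t - 1)"
    by simp
  then have "(4/b) * (cosh t / (t * cosh t - sinh t)) < (4/b) * (1 / (t - 1))"
    using assms(2) by (intro mult_strict_left_mono) auto
  moreover have "0 < t"
    using assms(1) by simp
  ultimately show ?thesis
    using lambda0_plus_eq[of t b] by simp
qed

lemma lambda1_minus_eq:
  fixes t :: real
  assumes "0 < t"
  shows "lambda1_minus b t = (6/b) * ((cosh t / sinh t)^3
           - sqrt (((cosh t / sinh t)^3)^2 - b * (3 + 4 * sinh t ^ 2) / sinh t ^ 2))"
proof -
  define s where "s = sinh t"
  define c where "c = cosh t"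
  have s: "s > 0" using assms by (simp add: s_def)
  have p: "c ^ 2 = s ^ 2 + 1" unfolding s_def c_def using cosh_square_eq[of t] by simp
  have S: "sinh (2*t) = 2*s*c" by (simp add: sinh_double s_def c_def)
  have C: "cosh (2*t) = 1 + 2 * s^2" using cosh_double[of t] p by (simp add: s_def c_def)
  have C4: "cosh (4*t) = (1 + 2 * s^2)^2 + (2*s*c)^2"
    using cosh_double[of "2*t"] S C by simp
  have e1: "6*(2*s*c)*(1+(1+2*s^2))/((1+2*s^2)-1)^2 = 6 * (c/s)^3"
    using s p by (simp add: field_simps power2_eq_square power3_eq_cube)
  have e2: "(2*s*c)^2*(1+(1+2*s^2))^2/((1+2*s^2)-1)^4
      - 2*b*(((1 + 2 * s^2)^2 + (2*s*c)^2) - (1+2*s^2))/((1+2*s^2)-1)^2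
      = ((c/s)^3)^2 - b * (3 + 4 * s^2) / s^2"
    using s p by (simp add: field_simps power2_eq_square power3_eq_cube) algebra
  show ?thesis unfolding lambda1_minus_def Let_def S C C4 e1 e2
    by (simp add: s_def c_def right_diff_distrib)
qed

lemma sqrt_gap_bounds:
  fixes a K :: real
  assumes "0 < a" "0 \<le> K" "K \<le> a^2"
  shows "K / (2*a) \<le> a - sqrt (a^2 - K)" "a - sqrt (a^2 - K) \<le> K / a"
proof -
  define D where "D = sqrt (a^2 - K)"
  have D0: "0 \<le> D" "D^2 = a^2 - K"
    unfolding D_def using assms by simp_all
  then have "D \<le> a"
    using assms by (smt (verit) power2_le_imp_le)
  moreover have "a - D = K / (a + D)"
    using D0 assms by (simp add: field_simps power2_eq_square)
  ultimately show "K / (2*a) \<le> a - sqrt (a^2 - K)" "a - sqrt (a^2 - K) \<le> K / a"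
    unfolding D_def[symmetric] using assms D0 by (auto intro: divide_left_mono)
qed

lemma lambda1_minus_radicand_nonneg:
  fixes t b :: real
  assumes "0 < t" "b \<le> 1/4"
  shows "0 \<le> ((cosh t / sinh t)^3)^2 - b * (3 + 4 * sinh t ^ 2) / sinh t ^ 2"
proof -
  define s c where "s = sinh t" and "c = cosh t"
  have s: "0 < s" using assms by (simp add: s_def)
  have "b * (3 + 4 * s^2) \<le> 1/4 * (3 + 4 * s^2)"
    using assms(2) by (intro mult_right_mono) auto
  then have "b * (3 + 4 * s^2) * s^4 \<le> (3/4 + s^2) * s^4"
    by (intro mult_right_mono) auto
  also have "\<dots> \<le> (3/4 + s^2) * s^4 + (9/4 * s^4 + 3 * s^2 + 1)"
    by simp
  also have "\<dots> = (s^2 + 1)^3"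
    by algebra
  also have "\<dots> = c^6"
    using power_mult[of c 2 3] cosh_square_eq[of t] by (simp add: s_def c_def)
  finally have "b * (3 + 4 * s^2) * s^4 / s^6 \<le> c^6 / s^6"
    by (simp add: divide_right_mono)
  moreover have "b * (3 + 4 * s^2) * s^4 / s^6 = b * (3 + 4 * s^2) / s^2"
    "c^6 / s^6 = ((c / s)^3)^2"
    using s by (simp_all add: power_divide field_simps flip: power_mult)
  ultimately show ?thesis
    by (simp add: s_def c_def)
qed

lemma lambda1_minus_bounds:
  fixes t b :: real
  assumes "0 < t" "0 < b" "b \<le> 1/4"
  shows "3 * ((3 + 4 * sinh t ^ 2) * sinh t / cosh t ^ 3) \<le> lambda1_minus b t"
    and "lambda1_minus b t \<le> 6 * ((3 + 4 * sinh t ^ 2) * sinh t / cosh t ^ 3)"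
proof -
  define s c where "s = sinh t" and "c = cosh t"
  define a K where "a = (c / s)^3" and "K = b * (3 + 4 * s^2) / s^2"
  have s: "0 < s" using assms by (simp add: s_def)
  have c: "0 < c" by (simp add: c_def)
  have a: "0 < a" using s c by (simp add: a_def)
  have K: "0 \<le> K" using assms s by (simp add: K_def)
  have "K \<le> a^2"
    using lambda1_minus_radicand_nonneg[OF assms(1,3)] by (simp add: a_def K_def s_def c_def)
  note gap = sqrt_gap_bounds[OF a K this]
  have l1: "lambda1_minus b t = (6/b) * (a - sqrt (a^2 - K))"
    unfolding lambda1_minus_eq[OF assms(1)] a_def K_def s_def c_def ..
  have q: "(6/b) * (K / a) = 6 * ((3 + 4 * s^2) * s / c^3)"
    using s c assms(2) by (simp add: K_def a_def field_simps power2_eq_square power3_eq_cube)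
  have "(6/b) * (K / (2*a)) = ((6/b) * (K / a)) / 2"
    by simp
  then have "3 * ((3 + 4 * s^2) * s / c^3) = (6/b) * (K / (2*a))"
    unfolding q by simp
  also have "\<dots> \<le> lambda1_minus b t"
    unfolding l1 using gap(1) assms(2) by (intro mult_left_mono) auto
  finally show "3 * ((3 + 4 * sinh t ^ 2) * sinh t / cosh t ^ 3) \<le> lambda1_minus b t"
    by (simp add: s_def c_def)
  have "lambda1_minus b t \<le> (6/b) * (K / a)"
    unfolding l1 using gap(2) assms(2) by (intro mult_left_mono) auto
  then show "lambda1_minus b t \<le> 6 * ((3 + 4 * sinh t ^ 2) * sinh t / cosh t ^ 3)"
    unfolding q s_def c_def .
qed

lemma lambda1_minus_less_24:
  fixes t b :: real
  assumes "0 < t" "0 < b" "b \<le> 1/4"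
  shows "lambda1_minus b t < 24"
proof -
  have "3 + 4 * sinh t ^ 2 \<le> 4 * cosh t ^ 2"
    using cosh_square_eq[of t] by simp
  then have "(3 + 4 * sinh t ^ 2) * sinh t < (4 * cosh t ^ 2) * cosh t"
    using sinh_less_cosh_real[of t] assms(1)
    by (intro mult_le_less_imp_less) (auto simp: add_pos_nonneg)
  then have "(3 + 4 * sinh t ^ 2) * sinh t / cosh t ^ 3 < 4"
    by (simp add: field_simps power2_eq_square power3_eq_cube)
  then show ?thesis
    using lambda1_minus_bounds(2)[OF assms] by linarith
qed

lemma cosh_cube_le:
  fixes t :: real
  assumes "1/2 \<le> sinh t"
  shows "cosh t ^ 3 \<le> (3 + 4 * sinh t ^ 2) * sinh t"
proof -
  define s c where "s = sinh t" and "c = cosh t"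
  have "0 \<le> s"
    using assms s_def by linarith
  have s_sq: "1/4 \<le> s^2"
    using power_mono[OF assms, of 2] by (simp add: s_def power2_eq_square)
  have "(c ^ 3)^2 = (c ^ 2)^3"
    by (simp flip: power_mult)
  also have "\<dots> = (s^2 + 1)^3"
    unfolding s_def c_def cosh_square_eq ..
  also have "\<dots> = ((3 + 4 * s^2) * s)^2 - (15 * (s^2)^3 + 21 * (s^2)^2 + 6 * s^2 - 1)"
    by algebra
  also have "\<dots> \<le> ((3 + 4 * s^2) * s)^2"
    using s_sq zero_le_power[of "s^2" 3] zero_le_power[of "s^2" 2] by linarith
  finally have "(c ^ 3)^2 \<le> ((3 + 4 * s^2) * s)^2" .
  moreover have "0 \<le> (3 + 4 * s^2) * s"
    using \<open>0 \<le> s\<close> by simp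
  ultimately show ?thesis
    unfolding s_def c_def by (rule power2_le_imp_le)
qed

lemma lambda1_minus_ge_3:
  fixes t b :: real
  assumes "0 < t" "0 < b" "b \<le> 1/4" "1/2 \<le> sinh t"
  shows "3 \<le> lambda1_minus b t"
proof -
  have "1 \<le> (3 + 4 * sinh t ^ 2) * sinh t / cosh t ^ 3"
    using cosh_cube_le[OF assms(4)] by simp
  then show ?thesis
    using lambda1_minus_bounds(1)[OF assms(1-3)] by linarith
qed

lemma continuous_on_lambda1_minus_minus_lambda0_plus:
  fixes a d b :: real
  assumes "0 < a"
  shows "continuous_on {a..d} (\<lambda>t. lambda1_minus b t - lambda0_plus b t)"
proof -
  have "cosh (2*t) - 1 \<noteq> 0" "1 - cosh (2*t) + t * sinh (2*t) \<noteq> 0" if "t \<in> {a..d}" for t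
    using that assms sinh_lt_mult_cosh[of t]
    unfolding one_minus_cosh_double_plus_mult_sinh_double by auto
  then show ?thesis
    unfolding lambda1_minus_def lambda0_plus_def Let_def by (intro continuous_intros) auto
qed

lemma lambda1_minus_lt_lambda0_plus:
  fixes t b :: real
  assumes "0 < t" "t \<le> 1 / (6*b)" "0 < b" "b \<le> 1/4"
  shows "lambda1_minus b t < lambda0_plus b t"
proof -
  have "24 \<le> 4 / (b * t)"
    using assms by (simp add: field_simps)
  then show ?thesis
    using lambda1_minus_less_24[OF assms(1,3,4)] lambda0_plus_gt[OF assms(1,3)] by linarith
qed

lemma lambda0_plus_lt_lambda1_minus:
  fixes t b :: real
  assumes "1 + 4 / (3*b) \<le> t" "0 < b" "b \<le> 1/4"
  shows "lambda0_plus b t < lambda1_minus b t"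
proof -
  have "0 < 4 / (3*b)"
    using assms(2) by simp
  then have "1 < t"
    using assms(1) by linarith
  have "lambda0_plus b t < 4 / (b * (t - 1))"
    using lambda0_plus_lt \<open>1 < t\<close> assms(2) .
  also have "\<dots> \<le> 3"
    using assms(1,2) \<open>1 < t\<close> by (simp add: field_simps)
  also have "\<dots> \<le> lambda1_minus b t"
    using le_sinh_real[of t] \<open>1 < t\<close> assms(2,3) by (intro lambda1_minus_ge_3) simp_all
  finally show ?thesis .
qed

theorem proposition5p6:
  fixes \<beta> :: real
  assumes "0 < \<beta>" and "\<beta> < 1/4"
  shows "\<exists>\<tau>m \<tau>s \<tau>p. 0 < \<tau>m \<and> 0 < \<tau>s \<and> 0 < \<tau>p \<and>
           lambda0_plus \<beta> \<tau>m > lambda1_minus \<beta> \<tau>m \<and>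
           lambda1_minus \<beta> \<tau>p > lambda0_plus \<beta> \<tau>p \<and>
           lambda1_minus \<beta> \<tau>s = lambda0_plus \<beta> \<tau>s"
proof -
  define \<tau>m \<tau>p :: real where "\<tau>m = 1/2" and "\<tau>p = 1 + 4 / (3*\<beta>)"
  have "0 < \<tau>m" "\<tau>m \<le> \<tau>p"
    using assms by (simp_all add: \<tau>m_def \<tau>p_def)
  have small: "lambda1_minus \<beta> \<tau>m < lambda0_plus \<beta> \<tau>m"
    using assms by (intro lambda1_minus_lt_lambda0_plus) (simp_all add: \<tau>m_def field_simps)
  have large: "lambda0_plus \<beta> \<tau>p < lambda1_minus \<beta> \<tau>p"
    using assms by (intro lambda0_plus_lt_lambda1_minus) (simp_all add: \<tau>p_def)
  have "continuous_on {\<tau>m..\<tau>p} (\<lambda>t. lambda1_minus \<beta> t - lambda0_plus \<beta> t)"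
    using \<open>0 < \<tau>m\<close> by (rule continuous_on_lambda1_minus_minus_lambda0_plus)
  then obtain \<tau>s where "\<tau>m \<le> \<tau>s" "lambda1_minus \<beta> \<tau>s = lambda0_plus \<beta> \<tau>s"
    using IVT'[of "\<lambda>t. lambda1_minus \<beta> t - lambda0_plus \<beta> t" \<tau>m 0 \<tau>p] \<open>\<tau>m \<le> \<tau>p\<close> small large
    by auto
  then show ?thesis
    using small large \<open>0 < \<tau>m\<close> \<open>\<tau>m \<le> \<tau>p\<close>
    by (intro exI[of _ \<tau>m] exI[of _ \<tau>s] exI[of _ \<tau>p]) auto
qed

end
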